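(* Let $G$ be a graph on a Polish space $X$. Then $\mu(G)\leq\aleph_0$ implies $\lambda(G)\leq\aleph_0$, which in turn implies $\chi(G)\leq\aleph_0$.
   Context: A graph $G$ on $X$ is a symmetric irreflexive relation. A $G$-anticlique is a set with no two distinct $G$-connected points. The chromatic number $\chi(G)$ is the smallest cardinality of a collection of $G$-anticliques covering $X$. An orientation of $G$ is an antisymmetric relation $o$ whose symmetrization equals $G$; the $o$-outflow of $x$ is $\{y\colon\langle x,y\rangle\in o\}$. The coloring number $\mu(G)$ is the smallest cardinal $\kappa$ such that there is an orientation of $G$ in which the outflow of every vertex has size $<\kappa$ (so $\mu(G)\leq\aleph_0$ means there is an orientation with all outflows finite). A set $A\subset X$ is $G$-loose if for every $x\in X$ there is an open neighborhood $O$ of $x$ containing no elements of $A$ that are $G$-connected to $x$; the loose number $\lambda(G)$ is the smallest cardinality of a collection of $G$-loose sets covering $X$. *)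

theory Defs
  imports "HOL-Analysis.Analysis"
begin

definition is_graph :: "('a \<Rightarrow> 'a \<Rightarrow> bool) \<Rightarrow> bool" where
  "is_graph G \<longleftrightarrow> (\<forall>x y. G x y \<longrightarrow> G y x) \<and> (\<forall>x. \<not> G x x)"

definition anticlique :: "('a \<Rightarrow> 'a \<Rightarrow> bool) \<Rightarrow> 'a set \<Rightarrow> bool" where
  "anticlique G A \<longleftrightarrow> (\<forall>x\<in>A. \<forall>y\<in>A. x \<noteq> y \<longrightarrow> \<not> G x y)"

definition orientation :: "('a \<Rightarrow> 'a \<Rightarrow> bool) \<Rightarrow> ('a \<Rightarrow> 'a \<Rightarrow> bool) \<Rightarrow> bool" where
  "orientation G R \<longleftrightarrow> (\<forall>x y. R x y \<and> R y x \<longrightarrow> x = y) \<and> (\<forall>x y. G x y \<longleftrightarrow> (R x y \<or> R y x))"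

definition outflow :: "('a \<Rightarrow> 'a \<Rightarrow> bool) \<Rightarrow> 'a \<Rightarrow> 'a set" where
  "outflow R x = {y. R x y}"

definition loose :: "('a::topological_space \<Rightarrow> 'a \<Rightarrow> bool) \<Rightarrow> 'a set \<Rightarrow> bool" where
  "loose G A \<longleftrightarrow> (\<forall>x. \<exists>U. open U \<and> x \<in> U \<and> (\<forall>a\<in>A \<inter> U. \<not> G x a))"

text \<open>mu(G) \<le> aleph_0: some orientation has all outflows finite.\<close>
definition coloring_number_le_aleph0 :: "('a \<Rightarrow> 'a \<Rightarrow> bool) \<Rightarrow> bool" where
  "coloring_number_le_aleph0 G \<longleftrightarrow> (\<exists>R. orientation G R \<and> (\<forall>x. finite (outflow R x)))"

definition loose_number_le_aleph0 :: "('a::topological_space \<Rightarrow> 'a \<Rightarrow> bool) \<Rightarrow> bool" where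
  "loose_number_le_aleph0 G \<longleftrightarrow>
     (\<exists>\<A>. countable \<A> \<and> (\<forall>A\<in>\<A>. loose G A) \<and> \<Union>\<A> = UNIV)"

definition chromatic_number_le_aleph0 :: "('a \<Rightarrow> 'a \<Rightarrow> bool) \<Rightarrow> bool" where
  "chromatic_number_le_aleph0 G \<longleftrightarrow>
     (\<exists>\<A>. countable \<A> \<and> (\<forall>A\<in>\<A>. anticlique G A) \<and> \<Union>\<A> = UNIV)"

end

theory Submission
  imports Defs
begin

text \<open>Fix a countable basis. Given an orientation with finite outflows, every point \<open>x\<close> lies in a
basic set \<open>B\<close> whose closure misses the outflow of \<open>x\<close>; for each \<open>B\<close>, the points of \<open>B\<close> with this
property form a loose set, since an edge from \<open>z\<close> to such a point \<open>a\<close> either leaves \<open>z\<close> (excluded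
near \<open>z\<close> because the outflow of \<open>z\<close> is closed) or leaves \<open>a\<close> (forcing \<open>z\<close> outside \<open>closure B\<close>).
Conversely, for a loose set \<open>A\<close> and a basic set \<open>B\<close>, the points \<open>x \<in> A \<inter> B\<close> adjacent to no point
of \<open>A \<inter> B\<close> form an anticlique, and looseness says every point of \<open>A\<close> lies in such a set.\<close>

lemma topological_basis_closure_subset:
  fixes U :: "'a::metric_space set"
  assumes "topological_basis \<B>" "open U" "x \<in> U"
  obtains V where "V \<in> \<B>" "x \<in> V" "closure V \<subseteq> U"
proof -
  obtain e where e: "e > 0" "cball x e \<subseteq> U"
    using assms(2,3) open_contains_cball by blast
  obtain V where V: "V \<in> \<B>" "x \<in> V" "V \<subseteq> ball x e"
    using topological_basisE[OF assms(1) open_ball] e(1) by (metis centre_in_ball)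
  have "closure V \<subseteq> cball x e"
    using V(3) ball_subset_cball by (intro closure_minimal) auto
  with V e show thesis using that by blast
qed

lemma loose_closure_disjoint_outflow:
  fixes G R :: "'a::t1_space \<Rightarrow> 'a \<Rightarrow> bool"
  assumes "orientation G R" "\<And>x. finite (outflow R x)" "\<And>x. \<not> G x x"
  shows "loose G {x \<in> B. closure B \<inter> outflow R x = {}}"
  unfolding loose_def
proof
  fix z
  have G_iff: "G x y \<longleftrightarrow> R x y \<or> R y x" for x y
    using assms(1) unfolding orientation_def by blast
  define U where "U = - outflow R z \<inter> (if z \<in> closure B then UNIV else - closure B)"
  have "open U"
    unfolding U_def using assms(2) by (auto intro: finite_imp_closed)
  moreover have "z \<in> U"
    unfolding U_def using assms(3) G_iff[of z z] by (auto simp: outflow_def)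
  moreover have "\<not> G z a" if a: "a \<in> B" "closure B \<inter> outflow R a = {}" "a \<in> U" for a
  proof
    assume "G z a"
    moreover have "\<not> R z a"
      using a(3) unfolding U_def outflow_def by auto
    ultimately have "z \<in> outflow R a"
      using G_iff unfolding outflow_def by blast
    then have "z \<notin> closure B" using a(2) by blast
    then show False
      using a(1,3) closure_subset unfolding U_def by auto
  qed
  ultimately show "\<exists>U. open U \<and> z \<in> U \<and> (\<forall>a\<in>{x \<in> B. closure B \<inter> outflow R x = {}} \<inter> U. \<not> G z a)"
    by blast
qed

lemma loose_number_le_aleph0_if_coloring_number_le_aleph0:
  fixes G :: "'a::{metric_space, second_countable_topology} \<Rightarrow> 'a \<Rightarrow> bool"
  assumes "is_graph G" "coloring_number_le_aleph0 G"
  shows "loose_number_le_aleph0 G"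
proof -
  obtain \<B> :: "'a set set" where "countable \<B>" and basis: "topological_basis \<B>"
    using ex_countable_basis by blast
  obtain R where R: "orientation G R" and fin: "\<And>x. finite (outflow R x)"
    using assms(2) unfolding coloring_number_le_aleph0_def by blast
  have irrefl: "\<And>x. \<not> G x x"
    using assms(1) unfolding is_graph_def by blast
  define \<A> where "\<A> = (\<lambda>B. {x \<in> B. closure B \<inter> outflow R x = {}}) ` \<B>"
  have "x \<in> \<Union>\<A>" for x
  proof -
    have "x \<notin> outflow R x"
      using R irrefl unfolding orientation_def outflow_def by blast
    moreover have "open (- outflow R x)"
      using fin by (auto intro: finite_imp_closed)
    ultimately obtain V where "V \<in> \<B>" "x \<in> V" "closure V \<subseteq> - outflow R x"
      using topological_basis_closure_subset[OF basis, of "- outflow R x" x] by auto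
    then show ?thesis unfolding \<A>_def by blast
  qed
  moreover have "loose G A" if "A \<in> \<A>" for A
    using that loose_closure_disjoint_outflow[OF R fin irrefl] unfolding \<A>_def by blast
  moreover have "countable \<A>"
    unfolding \<A>_def using \<open>countable \<B>\<close> by simp
  ultimately show ?thesis
    unfolding loose_number_le_aleph0_def by blast
qed

lemma loose_countable_Union_anticliques:
  fixes G :: "'a::second_countable_topology \<Rightarrow> 'a \<Rightarrow> bool"
  assumes "loose G A"
  obtains \<C> where "countable \<C>" "\<And>C. C \<in> \<C> \<Longrightarrow> anticlique G C" "\<Union>\<C> = A"
proof -
  obtain \<B> :: "'a set set" where "countable \<B>" and basis: "topological_basis \<B>"
    using ex_countable_basis by blast
  define \<C> where "\<C> = (\<lambda>B. {a \<in> A \<inter> B. \<forall>a'\<in>A \<inter> B. \<not> G a a'}) ` \<B>"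
  have "x \<in> \<Union>\<C>" if "x \<in> A" for x
  proof -
    obtain U where U: "open U" "x \<in> U" "\<forall>a\<in>A \<inter> U. \<not> G x a"
      using assms unfolding loose_def by blast
    obtain V where "V \<in> \<B>" "x \<in> V" "V \<subseteq> U"
      using topological_basisE[OF basis U(1,2)] by blast
    with U(3) \<open>x \<in> A\<close> show ?thesis unfolding \<C>_def by blast
  qed
  then have "\<Union>\<C> = A" unfolding \<C>_def by blast
  moreover have "anticlique G C" if "C \<in> \<C>" for C
    using that unfolding \<C>_def anticlique_def by blast
  moreover have "countable \<C>"
    unfolding \<C>_def using \<open>countable \<B>\<close> by simp
  ultimately show thesis
    using that by blast
qed

lemma chromatic_number_le_aleph0_if_loose_number_le_aleph0:
  fixes G :: "'a::second_countable_topology \<Rightarrow> 'a \<Rightarrow> bool"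
  assumes "loose_number_le_aleph0 G"
  shows "chromatic_number_le_aleph0 G"
proof -
  obtain \<A> where "countable \<A>" and loose: "\<forall>A\<in>\<A>. loose G A" and "\<Union>\<A> = UNIV"
    using assms unfolding loose_number_le_aleph0_def by auto
  have "\<forall>A\<in>\<A>. \<exists>\<C>. countable \<C> \<and> (\<forall>C\<in>\<C>. anticlique G C) \<and> \<Union>\<C> = A"
  proof
    fix A assume "A \<in> \<A>"
    then obtain \<C> where "countable \<C>" "\<And>C. C \<in> \<C> \<Longrightarrow> anticlique G C" "\<Union>\<C> = A"
      using loose loose_countable_Union_anticliques by metis
    then show "\<exists>\<C>. countable \<C> \<and> (\<forall>C\<in>\<C>. anticlique G C) \<and> \<Union>\<C> = A"
      by blast
  qed
  then obtain \<C> where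
      countable_\<C>: "\<And>A. A \<in> \<A> \<Longrightarrow> countable (\<C> A)" and
      anticlique_\<C>: "\<And>A C. A \<in> \<A> \<Longrightarrow> C \<in> \<C> A \<Longrightarrow> anticlique G C" and
      Union_\<C>: "\<And>A. A \<in> \<A> \<Longrightarrow> \<Union>(\<C> A) = A"
    by (metis bchoice)
  have "countable (\<Union>A\<in>\<A>. \<C> A)"
    using countable_\<C> \<open>countable \<A>\<close> by (intro countable_UN)
  moreover have "\<forall>C\<in>(\<Union>A\<in>\<A>. \<C> A). anticlique G C"
    using anticlique_\<C> by blast
  moreover have "\<Union>(\<Union>A\<in>\<A>. \<C> A) = UNIV"
  proof -
    have "\<Union>(\<Union>A\<in>\<A>. \<C> A) = (\<Union>A\<in>\<A>. \<Union>(\<C> A))"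
      by auto
    also have "\<dots> = \<Union>\<A>"
      using Union_\<C> by simp
    finally show ?thesis
      using \<open>\<Union>\<A> = UNIV\<close> by simp
  qed
  ultimately show ?thesis
    unfolding chromatic_number_le_aleph0_def by blast
qed

theorem theorem3p4:
  fixes G :: "'a::polish_space \<Rightarrow> 'a \<Rightarrow> bool"
  assumes "is_graph G"
  shows "(coloring_number_le_aleph0 G \<longrightarrow> loose_number_le_aleph0 G)
       \<and> (loose_number_le_aleph0 G \<longrightarrow> chromatic_number_le_aleph0 G)"
  using loose_number_le_aleph0_if_coloring_number_le_aleph0[OF assms]
    chromatic_number_le_aleph0_if_loose_number_le_aleph0 by blast

end
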